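(* Let $\mathcal{P}_1,\mathcal{P}_2$ be finite posets. If $\mathbf{T}\in\mathcal{N}_{<\infty}$ is a matrix of rank two, then $\mathbf{T}$ has ND rank two.
   Context: For a finite poset $\mathcal{Q}$, the order cone $\mathcal{C}(\mathcal{Q})$ is the set of $\mathbf{f}\in\mathbb{R}^{\mathcal{Q}}$ with $f_x\ge0$ for all $x$ and $f_x\le f_y$ whenever $x\preceq y$. $\mathcal{N}_{<\infty}$ is the set of matrices in $\mathbb{R}^{\mathcal{P}_1\times\mathcal{P}_2}$ of the form $\sum_{i=1}^r\mathbf{a}_i\mathbf{b}_i^\intercal$ for some finite $r$ with $\mathbf{a}_i\in\mathcal{C}(\mathcal{P}_1)$, $\mathbf{b}_i\in\mathcal{C}(\mathcal{P}_2)$; the ND rank is the minimal such $r$. Rank means ordinary real matrix rank. *)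

theory Defs
  imports "HOL-Analysis.Analysis"
begin

text \<open>Vectors in R^Q are \<open>real^'q\<close>; matrices in R^(P1 x P2) are \<open>real^'p2^'p1\<close>
  (rows indexed by P1, columns by P2).\<close>

definition order_cone :: "(real^'q::{finite,order}) set" where
  "order_cone = {f. (\<forall>x. 0 \<le> f $ x) \<and> (\<forall>x y. x \<le> y \<longrightarrow> f $ x \<le> f $ y)}"

definition outer_prod :: "real^'m \<Rightarrow> real^'n \<Rightarrow> real^'n^'m" where
  "outer_prod a b = (\<chi> i j. a $ i * b $ j)"

definition nd_decomp ::
  "real^'p2::{finite,order}^'p1::{finite,order} \<Rightarrow> nat \<Rightarrow> bool" where
  "nd_decomp T r \<longleftrightarrow> (\<exists>a b. (\<forall>i<r. a i \<in> order_cone \<and> b i \<in> order_cone) \<and>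
       T = (\<Sum>i<r. outer_prod (a i) (b i)))"

definition N_fin :: "(real^'p2::{finite,order}^'p1::{finite,order}) set" where
  "N_fin = {T. \<exists>r. nd_decomp T r}"

definition nd_rank :: "real^'p2::{finite,order}^'p1::{finite,order} \<Rightarrow> nat" where
  "nd_rank T = (LEAST r. nd_decomp T r)"

end

theory Submission
  imports Defs
begin

text \<open>If \<open>T = \<Sum>\<^sub>i a\<^sub>i b\<^sub>i\<^sup>T\<close> with all \<open>a\<^sub>i, b\<^sub>i\<close> in order cones, every column \<open>c\<^sub>j\<close> and every
  difference \<open>c\<^sub>j\<^sub>' - c\<^sub>j\<close> with \<open>j \<le> j'\<close> is a nonnegative combination of the \<open>a\<^sub>i\<close>, hence lies in
  the order cone of \<open>P\<^sub>1\<close>. When \<open>rank T = 2\<close> these finitely many vectors lie in a plane and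
  on the positive side of the functional \<open>v \<mapsto> \<Sum>\<^sub>k v\<^sub>k\<close>, so all of them lie in the cone spanned
  by the two extreme ones \<open>u, w\<close>. Writing \<open>c\<^sub>j = x\<^sub>j u + y\<^sub>j w\<close>, the coefficients are nonnegative
  and, applied to the differences, monotone in \<open>j\<close>; thus \<open>T = u x\<^sup>T + w y\<^sup>T\<close> is an ND
  decomposition of length two. The ND rank is never below the rank, which gives the other bound.\<close>

lemma finite_halfplane_set_in_cone_of_two:
  fixes G :: "(real \<times> real) set"
  assumes "finite G" and pos: "\<And>g. g \<in> G \<Longrightarrow> 0 < fst g"
    and "g\<^sub>0 \<in> G" "h\<^sub>0 \<in> G" "fst g\<^sub>0 * snd h\<^sub>0 \<noteq> fst h\<^sub>0 * snd g\<^sub>0"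
  obtains u w X Y where "u \<in> G" "w \<in> G" "linear X" "linear Y"
    "\<And>v. X v *\<^sub>R u + Y v *\<^sub>R w = v" "\<And>g. g \<in> G \<Longrightarrow> 0 \<le> X g \<and> 0 \<le> Y g"
proof -
  \<comment> \<open>\<open>u\<close> and \<open>w\<close> are the points of least and greatest slope; every other point of \<open>G\<close>
    has a slope in between and therefore lies in the cone they span.\<close>
  define t where "t v = snd v / fst v" for v :: "real \<times> real"
  obtain u where u: "u \<in> G" "\<And>g. g \<in> G \<Longrightarrow> t u \<le> t g"
    using ex_is_arg_min_if_finite[of G t] assms(1,3) by (auto simp: is_arg_min_linorder)
  obtain w where w: "w \<in> G" "\<And>g. g \<in> G \<Longrightarrow> t g \<le> t w"
    using ex_is_arg_min_if_finite[of G "\<lambda>v. - t v"] assms(1,3) by (auto simp: is_arg_min_linorder)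
  have "t g\<^sub>0 \<noteq> t h\<^sub>0"
    using assms(5) pos[OF assms(3)] pos[OF assms(4)] by (auto simp: t_def field_simps)
  then have "t u < t w"
    using u(2)[OF assms(3)] u(2)[OF assms(4)] w(2)[OF assms(3)] w(2)[OF assms(4)] by linarith
  then have d: "0 < t w - t u"
    by simp
  define X where "X v = (t w * fst v - snd v) / ((t w - t u) * fst u)" for v
  define Y where "Y v = (snd v - t u * fst v) / ((t w - t u) * fst w)" for v
  have "linear X" "linear Y"
    by (intro linearI; simp add: X_def Y_def diff_divide_distrib add_divide_distrib algebra_simps)+
  moreover have "X v *\<^sub>R u + Y v *\<^sub>R w = v" for v
  proof -
    have Xu: "X v * fst u = (t w * fst v - snd v) / (t w - t u)"
      and Yw: "Y v * fst w = (snd v - t u * fst v) / (t w - t u)"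
      using pos[OF u(1)] pos[OF w(1)] by (simp_all add: X_def Y_def)
    have "snd u = t u * fst u" "snd w = t w * fst w"
      using pos[OF u(1)] pos[OF w(1)] by (simp_all add: t_def)
    then have "X v * snd u + Y v * snd w = t u * (X v * fst u) + t w * (Y v * fst w)"
      by simp
    also have "\<dots> = snd v"
      using d unfolding Xu Yw by (simp add: divide_simps) (simp add: algebra_simps)
    finally have "X v * snd u + Y v * snd w = snd v" .
    moreover have "X v * fst u + Y v * fst w = fst v"
      using d unfolding Xu Yw by (simp add: divide_simps) (simp add: algebra_simps)
    ultimately show ?thesis
      by (simp add: prod_eq_iff)
  qed
  moreover have "0 \<le> X g \<and> 0 \<le> Y g" if "g \<in> G" for g
  proof -
    have "t u * fst g \<le> snd g" "snd g \<le> t w * fst g"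
      using u(2)[OF that] w(2)[OF that] pos[OF that] by (simp_all add: t_def field_simps)
    then show ?thesis
      using d pos[OF u(1)] pos[OF w(1)] by (simp add: X_def Y_def)
  qed
  ultimately show ?thesis
    using that u(1) w(1) by blast
qed

lemma plane_embedding:
  fixes f :: "'a::real_vector \<Rightarrow> real"
  assumes "independent {p, q}" "p \<noteq> q" "linear f" "f p \<noteq> 0"
  obtains L :: "'a \<Rightarrow> real \<times> real"
  where "linear L" "\<And>v. fst (L v) = f v" "inj_on L (span {p, q})"
    "L p = (f p, 0)" "L q = (f q, 1)"
proof -
  obtain \<phi> :: "'a \<Rightarrow> real" where \<phi>: "linear \<phi>" "\<phi> p = 0" "\<phi> q = 1"
    using linear_independent_extend[OF assms(1), of "\<lambda>v. if v = p then 0 else 1"] assms(2)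
    by auto
  define L where "L v = (f v, \<phi> v)" for v
  have "linear L"
    using assms(3) \<phi>(1) by (intro linearI) (simp_all add: L_def linear_add linear_scale)
  moreover have "L p = (f p, 0)" "L q = (f q, 1)"
    by (simp_all add: L_def \<phi>)
  moreover have "independent {L p, L q}"
  proof (rule independent_insertI)
    show "L p \<notin> span {L q}"
      using assms(4) by (auto simp: span_singleton \<open>L p = (f p, 0)\<close> \<open>L q = (f q, 1)\<close>)
    show "independent {L q}"
      by (simp add: \<open>L q = (f q, 1)\<close> zero_prod_def)
  qed
  moreover have "inj_on L {p, q}"
    using \<open>L p = (f p, 0)\<close> \<open>L q = (f q, 1)\<close> by (auto simp: inj_on_def)
  ultimately show ?thesis
    using that linear_inj_on_span_independent_image[of L "{p, q}"] by (simp add: L_def)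
qed

lemma finite_set_in_plane_in_cone_of_two:
  fixes G :: "'a::real_vector set" and f :: "'a \<Rightarrow> real"
  assumes "finite G" "linear f" "\<And>g. g \<in> G \<Longrightarrow> 0 < f g"
    and "p \<in> G" "q \<in> G" "independent {p, q}" "p \<noteq> q" "G \<subseteq> span {p, q}"
  obtains u w X Y where "u \<in> G" "w \<in> G" "linear X" "linear Y"
    "\<And>v. v \<in> span {p, q} \<Longrightarrow> X v *\<^sub>R u + Y v *\<^sub>R w = v"
    "\<And>g. g \<in> G \<Longrightarrow> 0 \<le> X g \<and> 0 \<le> Y g"
proof -
  have "f p \<noteq> 0"
    using assms(3)[OF assms(4)] by simp
  then obtain L :: "'a \<Rightarrow> real \<times> real"
    where L: "linear L" "\<And>v. fst (L v) = f v" "inj_on L (span {p, q})"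
      "L p = (f p, 0)" "L q = (f q, 1)"
    using plane_embedding[OF assms(6,7,2)] by blast
  have "finite (L ` G)" "\<And>g. g \<in> L ` G \<Longrightarrow> 0 < fst g" "L p \<in> L ` G" "L q \<in> L ` G"
    using assms(1,3,4,5) L(2) by auto
  moreover have "fst (L p) * snd (L q) \<noteq> fst (L q) * snd (L p)"
    using L(4,5) \<open>f p \<noteq> 0\<close> by simp
  ultimately obtain u' w' and X Y :: "real \<times> real \<Rightarrow> real"
    where uw': "u' \<in> L ` G" "w' \<in> L ` G" "linear X" "linear Y"
      "\<And>v. X v *\<^sub>R u' + Y v *\<^sub>R w' = v" "\<And>g. g \<in> L ` G \<Longrightarrow> 0 \<le> X g \<and> 0 \<le> Y g"
    using finite_halfplane_set_in_cone_of_two by blast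
  then obtain u w where u: "u \<in> G" "u' = L u" and w: "w \<in> G" "w' = L w"
    by blast
  have decomp: "(X \<circ> L) v *\<^sub>R u + (Y \<circ> L) v *\<^sub>R w = v" if "v \<in> span {p, q}" for v
  proof (rule inj_onD[OF L(3) _ _ that])
    show "L ((X \<circ> L) v *\<^sub>R u + (Y \<circ> L) v *\<^sub>R w) = L v"
      using uw'(5)[of "L v"] L(1) u(2) w(2) by (simp add: linear_add linear_scale)
    show "(X \<circ> L) v *\<^sub>R u + (Y \<circ> L) v *\<^sub>R w \<in> span {p, q}"
      using u(1) w(1) assms(8) by (intro span_add span_scale) auto
  qed
  have "linear (X \<circ> L)" "linear (Y \<circ> L)"
    using L(1) uw'(3,4) by (simp_all add: linear_compose)
  moreover have "0 \<le> (X \<circ> L) g \<and> 0 \<le> (Y \<circ> L) g" if "g \<in> G" for g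
    using uw'(6) that by simp
  ultimately show ?thesis
    using that[OF u(1) w(1) _ _ decomp] by blast
qed

lemma order_cone_nonneg_combination:
  fixes a :: "'i \<Rightarrow> real^'q::{finite,order}"
  assumes "\<And>i. i \<in> I \<Longrightarrow> a i \<in> order_cone" and "\<And>i. i \<in> I \<Longrightarrow> 0 \<le> s i"
  shows "(\<Sum>i\<in>I. s i *\<^sub>R a i) \<in> order_cone"
  using assms by (auto simp: order_cone_def intro!: sum_nonneg sum_mono mult_left_mono)

lemma order_cone_sum_pos:
  fixes v :: "real^'q::{finite,order}"
  assumes "v \<in> order_cone" and "v \<noteq> 0"
  shows "0 < (\<Sum>k\<in>UNIV. v $ k)"
proof -
  have nonneg: "0 \<le> v $ k" for k
    using assms(1) by (simp add: order_cone_def)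
  obtain k where "v $ k \<noteq> 0"
    using assms(2) by (auto simp: vec_eq_iff)
  with nonneg have "0 < v $ k"
    by (simp add: less_le)
  then show ?thesis
    using nonneg by (intro sum_pos2[where i=k]) auto
qed

lemma column_sum_outer_prod:
  "column j (\<Sum>i\<in>I. outer_prod (a i) (b i)) = (\<Sum>i\<in>I. b i $ j *\<^sub>R a i)"
  by (simp add: column_def outer_prod_def vec_eq_iff mult.commute)

lemma rank_sum_outer_prod_le:
  fixes a :: "nat \<Rightarrow> real^'m" and b :: "nat \<Rightarrow> real^'n"
  shows "rank (\<Sum>i<r. outer_prod (a i) (b i)) \<le> r"
proof -
  have "columns (\<Sum>i<r. outer_prod (a i) (b i)) \<subseteq> span (a ` {..<r})"
    by (auto simp: columns_def column_sum_outer_prod intro!: span_sum span_scale[OF span_base])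
  then have "rank (\<Sum>i<r. outer_prod (a i) (b i)) \<le> card (a ` {..<r})"
    unfolding column_rank_def by (rule dim_le_card) simp
  also have "\<dots> \<le> r"
    using card_image_le[of "{..<r}" a] by simp
  finally show ?thesis .
qed

lemma nd_decomp_rank_le: "nd_decomp T r \<Longrightarrow> rank T \<le> r"
  by (auto simp: nd_decomp_def rank_sum_outer_prod_le)

lemma nd_decomp_columns_in_order_cone:
  fixes T :: "real^'p2::{finite,order}^'p1::{finite,order}"
  assumes "nd_decomp T r"
  shows "column j T \<in> order_cone"
    and "j \<le> j' \<Longrightarrow> column j' T - column j T \<in> order_cone"
proof -
  obtain a b where cone: "\<And>i. i < r \<Longrightarrow> a i \<in> order_cone \<and> b i \<in> order_cone"
    and T: "T = (\<Sum>i<r. outer_prod (a i) (b i))"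
    using assms by (auto simp: nd_decomp_def)
  show "column j T \<in> order_cone"
    unfolding T column_sum_outer_prod
    using cone by (intro order_cone_nonneg_combination) (auto simp: order_cone_def)
  assume "j \<le> j'"
  have "column j' T - column j T = (\<Sum>i<r. (b i $ j' - b i $ j) *\<^sub>R a i)"
    by (simp add: T column_sum_outer_prod scaleR_diff_left sum_subtractf)
  also have "\<dots> \<in> order_cone"
    using cone \<open>j \<le> j'\<close> by (intro order_cone_nonneg_combination) (auto simp: order_cone_def)
  finally show "column j' T - column j T \<in> order_cone" .
qed

lemma nd_decomp_two_outer_prods:
  assumes "u \<in> order_cone" "w \<in> order_cone" "x \<in> order_cone" "y \<in> order_cone"
  shows "nd_decomp (outer_prod u x + outer_prod w y) 2"
  unfolding nd_decomp_def
proof (intro exI conjI)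
  show "\<forall>i<2. (if i = 0 then u else w) \<in> order_cone \<and> (if i = 0 then x else y) \<in> order_cone"
    using assms by auto
  show "outer_prod u x + outer_prod w y
      = (\<Sum>i<2. outer_prod (if i = 0 then u else w) (if i = (0::nat) then x else y))"
    by (simp add: numeral_2_eq_2)
qed

lemma vec_linear_columns_in_order_cone:
  fixes T :: "real^'p2::{finite,order}^'p1::{finite,order}"
  assumes "linear Z" "\<And>j. 0 \<le> Z (column j T)"
    and "\<And>j j'. j \<le> j' \<Longrightarrow> 0 \<le> Z (column j' T - column j T)"
  shows "(\<chi> j. Z (column j T)) \<in> order_cone"
  using assms by (simp add: order_cone_def linear_diff)

lemma eq_outer_prod_add_if_columns:
  fixes T :: "real^'n^'m"
  assumes "\<And>j. x $ j *\<^sub>R u + y $ j *\<^sub>R w = column j T"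
  shows "T = outer_prod u x + outer_prod w y"
proof -
  have "T $ k $ j = column j T $ k" for k j
    by (simp add: column_def)
  also have "column j T $ k = (x $ j *\<^sub>R u + y $ j *\<^sub>R w) $ k" for k j
    by (simp only: assms)
  finally show ?thesis
    by (simp add: vec_eq_iff outer_prod_def mult.commute)
qed

lemma rank_two_columns_basis:
  fixes T :: "real^'n^'m"
  assumes "rank T = 2"
  obtains p q where "p \<in> columns T" "q \<in> columns T" "independent {p, q}" "p \<noteq> q"
    "columns T \<subseteq> span {p, q}"
proof -
  obtain B where "B \<subseteq> columns T" "independent B" "columns T \<subseteq> span B" "card B = 2"
    using basis_exists[of "columns T"] assms by (metis column_rank_def)
  then show ?thesis
    using that by (metis card_2_iff insert_subset)
qed

lemma nd_decomp_two_if_rank_two: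
  fixes T :: "real^'p2::{finite,order}^'p1::{finite,order}"
  assumes cols: "\<And>j. column j T \<in> order_cone"
    and diffs: "\<And>j j'. j \<le> j' \<Longrightarrow> column j' T - column j T \<in> order_cone"
    and "rank T = 2"
  shows "nd_decomp T 2"
proof -
  obtain p q where pq: "p \<in> columns T" "q \<in> columns T" "independent {p, q}" "p \<noteq> q"
    and "columns T \<subseteq> span {p, q}"
    using rank_two_columns_basis[OF assms(3)] by blast
  then have col_span: "column j T \<in> span {p, q}" for j
    by (auto simp: columns_def)
  \<comment> \<open>The differences of columns are included so that the coefficient vectors below come out
    monotone and not merely nonnegative.\<close>
  define G where "G = (columns T \<union> {column j' T - column j T | j j'. j \<le> j'}) - {0}"
  have "G \<subseteq> range (\<lambda>j. column j T) \<union> range (\<lambda>(j, j'). column j' T - column j T)"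
    by (auto simp: G_def columns_def)
  then have "finite G"
    by (rule finite_subset) simp
  have G_cone: "g \<in> order_cone" "g \<noteq> 0" if "g \<in> G" for g
    using that cols diffs by (auto simp: G_def columns_def)
  have "G \<subseteq> span {p, q}"
    using col_span
    by (auto simp: G_def columns_def intro!: span_diff)
  have "p \<in> G" "q \<in> G"
    using pq dependent_zero[of "{p, q}"] by (auto simp: G_def)
  have sum_linear: "linear (\<lambda>v::real^'p1::{finite,order}. \<Sum>k\<in>UNIV. v $ k)"
    by (intro linearI) (simp_all add: sum.distrib sum_distrib_left)
  have sum_pos: "\<And>g. g \<in> G \<Longrightarrow> 0 < (\<Sum>k\<in>UNIV. g $ k)"
    using order_cone_sum_pos G_cone by blast
  obtain u w X Y where uw: "u \<in> G" "w \<in> G" "linear X" "linear Y"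
    and decomp: "\<And>v. v \<in> span {p, q} \<Longrightarrow> X v *\<^sub>R u + Y v *\<^sub>R w = v"
    and coeffs_nonneg: "\<And>g. g \<in> G \<Longrightarrow> 0 \<le> X g \<and> 0 \<le> Y g"
    using finite_set_in_plane_in_cone_of_two[OF \<open>finite G\<close> sum_linear sum_pos \<open>p \<in> G\<close> \<open>q \<in> G\<close>
        pq(3,4) \<open>G \<subseteq> span {p, q}\<close>] by blast
  have coeffs_nonneg0: "0 \<le> X g \<and> 0 \<le> Y g" if "g \<in> insert 0 G" for g
    using that coeffs_nonneg linear_0[OF uw(3)] linear_0[OF uw(4)] by auto
  have "column j T \<in> insert 0 G" "j \<le> j' \<Longrightarrow> column j' T - column j T \<in> insert 0 G" for j j'
    by (auto simp: G_def columns_def)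
  then have "(\<chi> j. X (column j T)) \<in> order_cone" "(\<chi> j. Y (column j T)) \<in> order_cone"
    using coeffs_nonneg0 by (intro vec_linear_columns_in_order_cone uw(3,4); simp)+
  moreover have "T = outer_prod u (\<chi> j. X (column j T)) + outer_prod w (\<chi> j. Y (column j T))"
    by (rule eq_outer_prod_add_if_columns) (simp add: decomp col_span)
  ultimately show ?thesis
    using nd_decomp_two_outer_prods[OF G_cone(1)[OF uw(1)] G_cone(1)[OF uw(2)]] by metis
qed

theorem theorem12:
  fixes T :: "real^'p2::{finite,order}^'p1::{finite,order}"
  assumes "T \<in> N_fin"
    and "rank T = 2"
  shows "nd_rank T = 2"
proof -
  obtain r where "nd_decomp T r"
    using assms(1) by (auto simp: N_fin_def)
  then have "nd_decomp T 2"
    using nd_decomp_two_if_rank_two nd_decomp_columns_in_order_cone assms(2) by blast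
  moreover have "2 \<le> n" if "nd_decomp T n" for n
    using nd_decomp_rank_le[OF that] assms(2) by simp
  ultimately show ?thesis
    unfolding nd_rank_def by (rule Least_equality)
qed

end
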